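(* Let $k\ge1$ and let $G\in\mathfrak A$ contain no subgraph isomorphic to $\Gamma_{k+1}$. If $H$ is a subgraph of $G$ isomorphic to $\Gamma_k$, then every vertex $q\in V(G)$ is an $H$-twin of some vertex of $H$.
   Context: $\mathfrak A$ is the class of maximal triangle-free graphs with at least two vertices containing no induced cycle of length six. (Maximal triangle-free: no triangle, and adding any new edge creates a triangle.) Andrásfai graph $\Gamma_k$: vertex set $\mathbb Z/(3k-1)\mathbb Z$, $ij$ an edge iff $i-j\in\{k,\dots,2k-1\}$ mod $3k-1$. For a subgraph $H$ of $G$, $q\in V(H)$, $q'\in V(G)$, $q'$ is an $H$-twin of $q$ if $\mathrm N(q)\cap V(H)=\mathrm N(q')\cap V(H)$ (neighbourhoods in $G$). *)

theory Defs
  imports Main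
begin

definition simple_graph :: "'a set \<Rightarrow> ('a \<Rightarrow> 'a \<Rightarrow> bool) \<Rightarrow> bool" where
  "simple_graph V E \<longleftrightarrow> finite V \<and> (\<forall>x y. E x y \<longrightarrow> E y x)
     \<and> (\<forall>x. \<not> E x x) \<and> (\<forall>x y. E x y \<longrightarrow> x \<in> V \<and> y \<in> V)"

definition triangle_free :: "'a set \<Rightarrow> ('a \<Rightarrow> 'a \<Rightarrow> bool) \<Rightarrow> bool" where
  "triangle_free V E \<longleftrightarrow>
     \<not> (\<exists>x\<in>V. \<exists>y\<in>V. \<exists>z\<in>V. E x y \<and> E y z \<and> E x z)"

text \<open>Maximal triangle-free: triangle-free, and adding any new edge xy
(x, y distinct and non-adjacent) creates a triangle, i.e. x and y have a
common neighbour.\<close>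
definition maximal_triangle_free :: "'a set \<Rightarrow> ('a \<Rightarrow> 'a \<Rightarrow> bool) \<Rightarrow> bool" where
  "maximal_triangle_free V E \<longleftrightarrow> triangle_free V E \<and>
     (\<forall>x\<in>V. \<forall>y\<in>V. x \<noteq> y \<and> \<not> E x y \<longrightarrow> (\<exists>z\<in>V. E x z \<and> E y z))"

definition has_induced_C6 :: "'a set \<Rightarrow> ('a \<Rightarrow> 'a \<Rightarrow> bool) \<Rightarrow> bool" where
  "has_induced_C6 V E \<longleftrightarrow> (\<exists>c :: nat \<Rightarrow> 'a. inj_on c {0..<6} \<and> c ` {0..<6} \<subseteq> V \<and>
     (\<forall>i<6. \<forall>j<6. E (c i) (c j) \<longleftrightarrow> (i + 6 - j) mod 6 \<in> {1, 5}))"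

definition classA :: "'a set \<Rightarrow> ('a \<Rightarrow> 'a \<Rightarrow> bool) \<Rightarrow> bool" where
  "classA V E \<longleftrightarrow> simple_graph V E \<and> card V \<ge> 2 \<and> maximal_triangle_free V E
     \<and> \<not> has_induced_C6 V E"

text \<open>Andrasfai graph Gamma_k: vertices {0..<3k-1} (representing Z/(3k-1)),
ij an edge iff i - j mod (3k-1) lies in {k, ..., 2k-1}.\<close>
definition andrasfai_verts :: "nat \<Rightarrow> nat set" where
  "andrasfai_verts k = {0..<3*k-1}"

definition andrasfai_edge :: "nat \<Rightarrow> nat \<Rightarrow> nat \<Rightarrow> bool" where
  "andrasfai_edge k i j \<longleftrightarrow> (i + (3*k-1) - j) mod (3*k-1) \<in> {k..2*k-1}"

text \<open>An embedding of Gamma_k as a (not necessarily induced) subgraph of G: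
an injective map on vertices sending edges to edges. The subgraph H it
determines has vertex set f ` andrasfai_verts k.\<close>
definition andrasfai_subgraph_emb ::
    "nat \<Rightarrow> 'a set \<Rightarrow> ('a \<Rightarrow> 'a \<Rightarrow> bool) \<Rightarrow> (nat \<Rightarrow> 'a) \<Rightarrow> bool" where
  "andrasfai_subgraph_emb k V E f \<longleftrightarrow> inj_on f (andrasfai_verts k)
     \<and> f ` andrasfai_verts k \<subseteq> V
     \<and> (\<forall>i\<in>andrasfai_verts k. \<forall>j\<in>andrasfai_verts k.
          andrasfai_edge k i j \<longrightarrow> E (f i) (f j))"

definition contains_andrasfai :: "nat \<Rightarrow> 'a set \<Rightarrow> ('a \<Rightarrow> 'a \<Rightarrow> bool) \<Rightarrow> bool" where
  "contains_andrasfai k V E \<longleftrightarrow> (\<exists>f. andrasfai_subgraph_emb k V E f)"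

definition is_twin :: "('a \<Rightarrow> 'a \<Rightarrow> bool) \<Rightarrow> 'a set \<Rightarrow> 'a \<Rightarrow> 'a \<Rightarrow> bool" where
  "is_twin E VH q q' \<longleftrightarrow> {x \<in> VH. E q x} = {x \<in> VH. E q' x}"

end

theory Submission
  imports Defs
begin

text \<open>
  The vertices of a copy \<open>H\<close> of \<open>\<Gamma>\<^sub>k\<close> seen by an outside vertex \<open>x\<close> (its trace) form an
  independent set of \<open>\<Gamma>\<^sub>k\<close>, as \<open>G\<close> is triangle-free; it suffices to show that the trace is
  a maximal independent set, since these are exactly the neighbourhoods of \<open>\<Gamma>\<^sub>k\<close>. This goes
  by downward induction on the size of the trace. If a vertex of \<open>\<Gamma>\<^sub>k\<close>, rotated to \<open>0\<close>, were
  not dominated, maximality of \<open>G\<close> and the absence of induced hexagons would force the trace,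
  after a reflection, into the arc \<open>{1..<k}\<close>. Using the induction hypothesis, the trace is then
  all of \<open>{1..<k}\<close> and \<open>x\<close> has outside neighbours \<open>w\<close>, \<open>w'\<close> that are twins of the vertices
  \<open>k\<close> and \<open>0\<close> of \<open>H\<close>. But then \<open>H\<close> together with \<open>x\<close>, \<open>w'\<close>, \<open>w\<close> contains \<open>\<Gamma>\<^sub>k\<^sub>+\<^sub>1\<close>.
\<close>

lemma add_sub_mod_eq:
  "(i::nat) < n \<Longrightarrow> j < n \<Longrightarrow> (i + n - j) mod n = (if j \<le> i then i - j else i + n - j)"
  by (auto simp: le_mod_geq)

lemma andrasfai_edge_iff:
  assumes "i < 3*k-1" "j < 3*k-1"
  shows "andrasfai_edge k i j \<longleftrightarrow> (k + j \<le> i \<and> i < 2*k + j) \<or> (k + i \<le> j \<and> j < 2*k + i)"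
proof -
  have "andrasfai_edge k i j \<longleftrightarrow> (if j \<le> i then i - j else i + (3*k-1) - j) \<in> {k..2*k-1}"
    unfolding andrasfai_edge_def by (simp only: add_sub_mod_eq[OF assms])
  then show ?thesis using assms by (cases "j \<le> i") auto
qed

lemma andrasfai_edge_sym:
  "i < 3*k-1 \<Longrightarrow> j < 3*k-1 \<Longrightarrow> andrasfai_edge k i j \<longleftrightarrow> andrasfai_edge k j i"
  by (simp add: andrasfai_edge_iff) arith

lemma andrasfai_edge_irrefl: "k \<ge> 1 \<Longrightarrow> i < 3*k-1 \<Longrightarrow> \<not> andrasfai_edge k i i"
  by (simp add: andrasfai_edge_iff)

lemma andrasfai_no_triangle:
  "a < 3*k-1 \<Longrightarrow> b < 3*k-1 \<Longrightarrow> c < 3*k-1 \<Longrightarrow>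
    andrasfai_edge k a b \<Longrightarrow> andrasfai_edge k b c \<Longrightarrow> \<not> andrasfai_edge k a c"
  by (simp add: andrasfai_edge_iff) arith

lemma andrasfai_edge_upI:
  "i < 3*k-1 \<Longrightarrow> j < 3*k-1 \<Longrightarrow> k + i \<le> j \<Longrightarrow> j < 2*k + i \<Longrightarrow> andrasfai_edge k i j"
  by (simp add: andrasfai_edge_iff)

lemma andrasfai_edge_downI:
  "i < 3*k-1 \<Longrightarrow> j < 3*k-1 \<Longrightarrow> k + j \<le> i \<Longrightarrow> i < 2*k + j \<Longrightarrow> andrasfai_edge k i j"
  by (simp add: andrasfai_edge_iff)

lemma andrasfai_not_edge_close:
  "i < 3*k-1 \<Longrightarrow> j < 3*k-1 \<Longrightarrow> i < k + j \<Longrightarrow> j < k + i \<Longrightarrow> \<not> andrasfai_edge k i j"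
  by (simp add: andrasfai_edge_iff)

lemma andrasfai_not_edge_far:
  "i < 3*k-1 \<Longrightarrow> j < 3*k-1 \<Longrightarrow> 2*k + i \<le> j \<Longrightarrow> \<not> andrasfai_edge k i j"
  by (simp add: andrasfai_edge_iff)

lemma andrasfai_common_neighbour:
  assumes ij: "i < 3*k-1" "j < 3*k-1" "i \<noteq> j" and nij: "\<not> andrasfai_edge k i j"
  shows "\<exists>m<3*k-1. andrasfai_edge k i m \<and> andrasfai_edge k j m"
proof -
  have ordered: "\<exists>m<3*k-1. andrasfai_edge k i m \<and> andrasfai_edge k j m"
    if lt: "i < j" "j < 3*k-1" and ne: "\<not> andrasfai_edge k i j" for i j
  proof -
    have "i < 3*k-1" using lt by simp
    then consider "2*k + i \<le> j" | "j < k + i" "j + k < 3*k-1" | "j < k + i" "3*k-1 \<le> j + k"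
      using lt ne by (simp add: andrasfai_edge_iff) linarith
    then show ?thesis
    proof cases
      case 1 with lt show ?thesis by (intro exI[of _ "i+k"]) (auto simp: andrasfai_edge_iff)
    next
      case 2 with lt show ?thesis by (intro exI[of _ "j+k"]) (auto simp: andrasfai_edge_iff)
    next
      case 3 with lt show ?thesis by (intro exI[of _ "i-k"]) (auto simp: andrasfai_edge_iff)
    qed
  qed
  show ?thesis
  proof (cases "i < j")
    case True with ij nij ordered show ?thesis by blast
  next
    case False
    then have "j < i" using ij by simp
    moreover have "\<not> andrasfai_edge k j i" using nij andrasfai_edge_sym ij by blast
    ultimately show ?thesis using ij ordered[of j i] by blast
  qed
qed

definition andrasfai_automorphism :: "nat \<Rightarrow> (nat \<Rightarrow> nat) \<Rightarrow> bool" where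
  "andrasfai_automorphism k \<sigma> \<longleftrightarrow> (\<forall>i<3*k-1. \<sigma> i < 3*k-1) \<and> inj_on \<sigma> {0..<3*k-1} \<and>
     (\<forall>a<3*k-1. \<forall>b<3*k-1. andrasfai_edge k (\<sigma> a) (\<sigma> b) \<longleftrightarrow> andrasfai_edge k a b)"

lemma andrasfai_automorphismD:
  assumes "andrasfai_automorphism k \<sigma>"
  shows "i < 3*k-1 \<Longrightarrow> \<sigma> i < 3*k-1" and "inj_on \<sigma> {0..<3*k-1}"
    and "a < 3*k-1 \<Longrightarrow> b < 3*k-1 \<Longrightarrow> andrasfai_edge k (\<sigma> a) (\<sigma> b) \<longleftrightarrow> andrasfai_edge k a b"
  using assms unfolding andrasfai_automorphism_def by auto

lemma andrasfai_automorphism_image: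
  "andrasfai_automorphism k \<sigma> \<Longrightarrow> \<sigma> ` {0..<3*k-1} = {0..<3*k-1}"
  by (rule endo_inj_surj) (auto dest: andrasfai_automorphismD)

lemma andrasfai_automorphismI:
  assumes "\<And>i. i < 3*k-1 \<Longrightarrow> \<sigma> i < 3*k-1"
    and "\<And>a b. a < 3*k-1 \<Longrightarrow> b < 3*k-1 \<Longrightarrow> \<sigma> a = \<sigma> b \<Longrightarrow> a = b"
    and "\<And>a b. a < 3*k-1 \<Longrightarrow> b < 3*k-1 \<Longrightarrow>
      (k + \<sigma> b \<le> \<sigma> a \<and> \<sigma> a < 2*k + \<sigma> b) \<or> (k + \<sigma> a \<le> \<sigma> b \<and> \<sigma> b < 2*k + \<sigma> a) \<longleftrightarrow>
      (k + b \<le> a \<and> a < 2*k + b) \<or> (k + a \<le> b \<and> b < 2*k + a)"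
  shows "andrasfai_automorphism k \<sigma>"
  unfolding andrasfai_automorphism_def inj_on_def using assms by (simp add: andrasfai_edge_iff)

definition andrasfai_rotate :: "nat \<Rightarrow> nat \<Rightarrow> nat \<Rightarrow> nat" where
  "andrasfai_rotate k c i = (i + c) mod (3*k-1)"

lemma andrasfai_rotate_eq:
  "c < 3*k-1 \<Longrightarrow> i < 3*k-1 \<Longrightarrow>
    andrasfai_rotate k c i = (if i + c < 3*k-1 then i + c else i + c - (3*k-1))"
  by (auto simp: andrasfai_rotate_def le_mod_geq)

lemma andrasfai_rotate_cases:
  assumes "c < 3*k-1" "i < 3*k-1"
  shows "(i + c < 3*k-1 \<and> andrasfai_rotate k c i = i + c) \<or>
    (3*k-1 \<le> i + c \<and> andrasfai_rotate k c i + (3*k-1) = i + c)"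
  using andrasfai_rotate_eq[OF assms] by auto

lemma andrasfai_automorphism_rotate:
  assumes "c < 3*k-1" shows "andrasfai_automorphism k (andrasfai_rotate k c)"
proof (rule andrasfai_automorphismI)
  let ?r = "andrasfai_rotate k c"
  fix a b assume ab: "a < 3*k-1" "b < 3*k-1"
  note ra = andrasfai_rotate_cases[OF assms ab(1)] and rb = andrasfai_rotate_cases[OF assms ab(2)]
  from ra ab assms show "?r a < 3*k-1" by arith
  show "?r a = ?r b \<Longrightarrow> a = b" using ra rb ab assms by arith
  show "(k + ?r b \<le> ?r a \<and> ?r a < 2*k + ?r b) \<or> (k + ?r a \<le> ?r b \<and> ?r b < 2*k + ?r a) \<longleftrightarrow>
      (k + b \<le> a \<and> a < 2*k + b) \<or> (k + a \<le> b \<and> b < 2*k + a)"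
    using ra rb ab assms by arith
qed

definition andrasfai_reflect :: "nat \<Rightarrow> nat \<Rightarrow> nat \<Rightarrow> nat" where
  "andrasfai_reflect k c i = (c + (3*k-1) - i) mod (3*k-1)"

lemma andrasfai_reflect_eq:
  "c < 3*k-1 \<Longrightarrow> i < 3*k-1 \<Longrightarrow>
    andrasfai_reflect k c i = (if i \<le> c then c - i else c + (3*k-1) - i)"
  unfolding andrasfai_reflect_def
  by (metis add_sub_mod_eq add.commute)

lemma andrasfai_reflect_cases:
  assumes "c < 3*k-1" "i < 3*k-1"
  shows "(i \<le> c \<and> andrasfai_reflect k c i + i = c) \<or>
    (c < i \<and> andrasfai_reflect k c i + i = c + (3*k-1))"
  using andrasfai_reflect_eq[OF assms] assms by auto

lemma andrasfai_automorphism_reflect: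
  assumes "c < 3*k-1" shows "andrasfai_automorphism k (andrasfai_reflect k c)"
proof (rule andrasfai_automorphismI)
  let ?r = "andrasfai_reflect k c"
  fix a b assume ab: "a < 3*k-1" "b < 3*k-1"
  note ra = andrasfai_reflect_cases[OF assms ab(1)] and rb = andrasfai_reflect_cases[OF assms ab(2)]
  from ra ab assms show "?r a < 3*k-1" by arith
  show "?r a = ?r b \<Longrightarrow> a = b" using ra rb ab assms by arith
  show "(k + ?r b \<le> ?r a \<and> ?r a < 2*k + ?r b) \<or> (k + ?r a \<le> ?r b \<and> ?r b < 2*k + ?r a) \<longleftrightarrow>
      (k + b \<le> a \<and> a < 2*k + b) \<or> (k + a \<le> b \<and> b < 2*k + a)"
    using ra rb ab assms by arith
qed

definition andrasfai_nbhd :: "nat \<Rightarrow> nat \<Rightarrow> nat set" where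
  "andrasfai_nbhd k j = {i. i < 3*k-1 \<and> andrasfai_edge k j i}"

text \<open>A maximal independent set \<open>T\<close> of \<open>\<Gamma>\<^sub>k\<close> is a neighbourhood: starting from
  \<open>m = Min T\<close>, let \<open>a\<close> be the largest element of \<open>T\<close> below \<open>m + k\<close>; independence
  puts every other element at or beyond \<open>a + 2k\<close>, so \<open>T\<close> lies in the neighbourhood
  of \<open>a + k\<close> (mod \<open>3k - 1\<close>), and maximality gives equality.\<close>
lemma maximal_independent_eq_andrasfai_nbhd:
  assumes k: "k \<ge> 1" and sub: "T \<subseteq> {0..<3*k-1}"
    and indep: "\<And>a b. a \<in> T \<Longrightarrow> b \<in> T \<Longrightarrow> \<not> andrasfai_edge k a b"
    and maximal: "\<And>i. i < 3*k-1 \<Longrightarrow> i \<notin> T \<Longrightarrow> \<exists>t\<in>T. andrasfai_edge k i t"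
  shows "\<exists>j<3*k-1. T = andrasfai_nbhd k j"
proof -
  have fin: "finite T" using sub finite_subset by blast
  have "T \<noteq> {}" using maximal[of 0] k by auto
  define m where "m = Min T"
  have mT: "m \<in> T" and m_le: "\<And>t. t \<in> T \<Longrightarrow> m \<le> t"
    using fin \<open>T \<noteq> {}\<close> by (auto simp: m_def)
  define L where "L = {t \<in> T. t \<le> m + k - 1}"
  have "finite L" "m \<in> L" using fin mT k by (auto simp: L_def)
  define a where "a = Max L"
  have aL: "a \<in> L" unfolding a_def using \<open>finite L\<close> \<open>m \<in> L\<close> by (intro Max_in) auto
  have le_a: "\<And>t. t \<in> L \<Longrightarrow> t \<le> a" unfolding a_def using \<open>finite L\<close> by simp
  have aT: "a \<in> T" and am: "a \<le> m + k - 1" "m \<le> a" using aL m_le by (auto simp: L_def)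
  have bound: "\<And>t. t \<in> T \<Longrightarrow> t < 3*k-1" using sub by auto
  have position: "(m \<le> t \<and> t \<le> a) \<or> a + 2*k \<le> t" if tT: "t \<in> T" for t
  proof (cases "t \<le> m + k - 1")
    case True then show ?thesis using le_a m_le tT by (auto simp: L_def)
  next
    case False
    have "\<not> andrasfai_edge k m t" "\<not> andrasfai_edge k a t" using indep tT mT aT by auto
    then show ?thesis
      using False am bound[OF tT] bound[OF mT] bound[OF aT] m_le[OF tT] k
      by (simp add: andrasfai_edge_iff) arith
  qed
  define j where "j = (if a \<le> 2*k-2 then a + k else a - (2*k-1))"
  have j: "j < 3*k-1" using bound[OF aT] k by (auto simp: j_def)
  have T_nbhd: "T \<subseteq> andrasfai_nbhd k j"
  proof
    fix t assume tT: "t \<in> T"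
    have "andrasfai_edge k j t"
      using position[OF tT] bound[OF tT] bound[OF aT] am k j
        by (simp add: andrasfai_edge_iff j_def) arith
    then show "t \<in> andrasfai_nbhd k j" using bound[OF tT] by (simp add: andrasfai_nbhd_def)
  qed
  have "andrasfai_nbhd k j \<subseteq> T"
  proof
    fix i assume i: "i \<in> andrasfai_nbhd k j"
    show "i \<in> T"
    proof (rule ccontr)
      assume "i \<notin> T"
      then obtain t where tT: "t \<in> T" and "andrasfai_edge k i t"
        using maximal i by (auto simp: andrasfai_nbhd_def)
      moreover have "andrasfai_edge k j t" "andrasfai_edge k j i" "t < 3*k-1" "i < 3*k-1"
        using T_nbhd tT i by (auto simp: andrasfai_nbhd_def)
      ultimately show False using andrasfai_no_triangle[OF j, of i t] by blast
    qed
  qed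
  then show ?thesis using T_nbhd j by blast
qed

lemma andrasfai_nbhd_ne_singleton:
  assumes k: "k \<ge> 2" and j: "j < 3*k-1"
  shows "andrasfai_nbhd k j \<noteq> {i}"
proof -
  let ?r = "andrasfai_rotate k j"
  have r: "andrasfai_automorphism k ?r" by (rule andrasfai_automorphism_rotate[OF j])
  have r0: "?r 0 = j" using j by (simp add: andrasfai_rotate_eq)
  have lt: "0 < 3*k-1" "k < 3*k-1" "k+1 < 3*k-1" using k by auto
  have "andrasfai_edge k 0 k" "andrasfai_edge k 0 (k+1)"
    using lt k by (auto intro: andrasfai_edge_upI)
  then have "andrasfai_edge k j (?r k)" "andrasfai_edge k j (?r (k+1))"
    using andrasfai_automorphismD(3)[OF r, of 0] r0 lt by auto
  then have "?r k \<in> andrasfai_nbhd k j" "?r (k+1) \<in> andrasfai_nbhd k j"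
    using andrasfai_automorphismD(1)[OF r] lt unfolding andrasfai_nbhd_def by auto
  moreover have "?r k \<noteq> ?r (k+1)"
    using andrasfai_automorphismD(2)[OF r] lt unfolding inj_on_def by fastforce
  ultimately show ?thesis by auto
qed

text \<open>Deleting the vertices \<open>0\<close>, \<open>k + 1\<close> and \<open>2k + 1\<close> of \<open>\<Gamma>\<^sub>k\<^sub>+\<^sub>1\<close> leaves a graph
  that maps injectively and edge-preservingly into \<open>\<Gamma>\<^sub>k\<close>.\<close>
definition andrasfai_shrink :: "nat \<Rightarrow> nat \<Rightarrow> nat" where
  "andrasfai_shrink k p =
    (if p < k then p + 2*k - 1 else if p = k then 0 else if p \<le> 2*k then p - (k+1) else p - (k+2))"

lemma andrasfai_Suc_edge_iff:
  assumes "p < 3*k+2" "q < 3*k+2"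
  shows "andrasfai_edge (k+1) p q \<longleftrightarrow>
    (k + 1 + q \<le> p \<and> p < 2*k + 2 + q) \<or> (k + 1 + p \<le> q \<and> q < 2*k + 2 + p)"
  using andrasfai_edge_iff[of p "k+1" q] assms by (simp add: algebra_simps)

lemma andrasfai_shrink_cases:
  assumes "p < 3*k+2" "p \<notin> {0, k+1, 2*k+1}"
  shows "(0 < p \<and> p < k \<and> andrasfai_shrink k p + 1 = p + 2*k) \<or> (p = k \<and> andrasfai_shrink k p = 0)
    \<or> (k+1 < p \<and> p \<le> 2*k \<and> andrasfai_shrink k p + k + 1 = p)
    \<or> (2*k+1 < p \<and> p < 3*k+2 \<and> andrasfai_shrink k p + k + 2 = p)"
  using assms unfolding andrasfai_shrink_def by auto

lemma andrasfai_shrink_less: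
  assumes "k \<ge> 1" "p < 3*k+2" "p \<notin> {0, k+1, 2*k+1}"
  shows "andrasfai_shrink k p < 3*k-1"
  using andrasfai_shrink_cases[OF assms(2,3)] assms by (elim disjE conjE; linarith)

lemma inj_on_andrasfai_shrink: "inj_on (andrasfai_shrink k) ({0..<3*k+2} - {0, k+1, 2*k+1})"
  by (auto simp: andrasfai_shrink_def inj_on_def split: if_splits)

lemma andrasfai_shrink_edge:
  assumes k: "k \<ge> 1"
    and p: "p < 3*k+2" "p \<notin> {0, k+1, 2*k+1}" and q: "q < 3*k+2" "q \<notin> {0, k+1, 2*k+1}"
    and pq: "andrasfai_edge (k+1) p q"
  shows "andrasfai_edge k (andrasfai_shrink k p) (andrasfai_shrink k q)"
proof -
  let ?p = "andrasfai_shrink k p" and ?q = "andrasfai_shrink k q"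
  note facts = pq[unfolded andrasfai_Suc_edge_iff[OF p(1) q(1)]]
    andrasfai_shrink_cases[OF p] andrasfai_shrink_cases[OF q] k
  have "(k + ?q \<le> ?p \<and> ?p < 2*k + ?q) \<or> (k + ?p \<le> ?q \<and> ?q < 2*k + ?p)"
  proof (cases "?q \<le> ?p")
    case True
    with facts have "k + ?q \<le> ?p \<and> ?p < 2*k + ?q" by (elim disjE conjE; intro conjI; linarith)
    then show ?thesis ..
  next
    case False
    with facts have "k + ?p \<le> ?q \<and> ?q < 2*k + ?p" by (elim disjE conjE; intro conjI; linarith)
    then show ?thesis ..
  qed
  then show ?thesis
    using andrasfai_edge_iff[OF andrasfai_shrink_less[OF k p] andrasfai_shrink_less[OF k q]] by blast
qed

lemma all_less_6: "(\<forall>i<(6::nat). P i) \<longleftrightarrow> P 0 \<and> P 1 \<and> P 2 \<and> P 3 \<and> P 4 \<and> P 5"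
proof -
  have "{..<(6::nat)} = {0,1,2,3,4,5}" by auto
  then show ?thesis by (auto simp: lessThan_iff[symmetric])
qed

lemma has_induced_C6I:
  assumes sym: "\<And>x y. E x y \<Longrightarrow> E y x" and irrefl: "\<And>x. \<not> E x x"
    and distinct: "distinct [a, b, c, d, e, f]" and in_V: "{a, b, c, d, e, f} \<subseteq> V"
    and edges: "E a b" "E b c" "E c d" "E d e" "E e f" "E f a"
    and non_edges: "\<not> E a c" "\<not> E a d" "\<not> E a e" "\<not> E b d" "\<not> E b e" "\<not> E b f"
      "\<not> E c e" "\<not> E c f" "\<not> E d f"
  shows "has_induced_C6 V E"
  unfolding has_induced_C6_def
proof (intro exI[of _ "\<lambda>i. [a, b, c, d, e, f] ! i"] conjI)
  show "inj_on (\<lambda>i. [a, b, c, d, e, f] ! i) {0..<6}"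
    using distinct by (auto simp: inj_on_def nth_eq_iff_index_eq)
  show "(\<lambda>i. [a, b, c, d, e, f] ! i) ` {0..<6} \<subseteq> V"
    using in_V by (auto simp: less_Suc_eq numeral_eq_Suc)
  have "E b a" "E c b" "E d c" "E e d" "E f e" "E a f" using edges sym by blast+
  moreover have "\<not> E c a" "\<not> E d a" "\<not> E e a" "\<not> E d b" "\<not> E e b" "\<not> E f b"
      "\<not> E e c" "\<not> E f c" "\<not> E f d"
    using non_edges sym by blast+
  ultimately show "\<forall>i<6. \<forall>j<6. E ([a, b, c, d, e, f] ! i) ([a, b, c, d, e, f] ! j) \<longleftrightarrow>
      (i + 6 - j) mod 6 \<in> {1, 5}"
    using edges non_edges irrefl by (simp only: all_less_6) simp
qed

locale andrasfai_free_classA =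
  fixes V :: "'a set" and E :: "'a \<Rightarrow> 'a \<Rightarrow> bool" and k :: nat
  assumes k_pos: "k \<ge> 1" and classA: "classA V E"
    and no_andrasfai_Suc: "\<not> contains_andrasfai (k+1) V E"
begin

lemma E_sym: "E x y \<Longrightarrow> E y x"
  using classA unfolding classA_def simple_graph_def by blast

lemma E_irrefl: "\<not> E x x"
  using classA unfolding classA_def simple_graph_def by blast

lemma E_in_V: "E x y \<Longrightarrow> x \<in> V" "E x y \<Longrightarrow> y \<in> V"
  using classA unfolding classA_def simple_graph_def by blast+

lemma no_triangle:
  assumes "E x y" "E y z" shows "\<not> E x z"
proof -
  have "x \<in> V" "y \<in> V" "z \<in> V" using E_in_V assms by blast+
  moreover have "triangle_free V E" using classA unfolding classA_def maximal_triangle_free_def by simp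
  ultimately show ?thesis using assms unfolding triangle_free_def by blast
qed

lemma common_neighbour:
  "x \<in> V \<Longrightarrow> y \<in> V \<Longrightarrow> x \<noteq> y \<Longrightarrow> \<not> E x y \<Longrightarrow> \<exists>z\<in>V. E x z \<and> E y z"
  using classA unfolding classA_def maximal_triangle_free_def by blast

lemma no_induced_C6: "\<not> has_induced_C6 V E"
  using classA unfolding classA_def by blast

abbreviation emb :: "(nat \<Rightarrow> 'a) \<Rightarrow> bool" where
  "emb f \<equiv> andrasfai_subgraph_emb k V E f"

lemma emb_E:
  "emb f \<Longrightarrow> i < 3*k-1 \<Longrightarrow> j < 3*k-1 \<Longrightarrow> andrasfai_edge k i j \<Longrightarrow> E (f i) (f j)"
  unfolding andrasfai_subgraph_emb_def andrasfai_verts_def by auto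

lemma emb_in_V: "emb f \<Longrightarrow> i < 3*k-1 \<Longrightarrow> f i \<in> V"
  unfolding andrasfai_subgraph_emb_def andrasfai_verts_def by auto

lemma emb_eq_iff: "emb f \<Longrightarrow> i < 3*k-1 \<Longrightarrow> j < 3*k-1 \<Longrightarrow> f i = f j \<longleftrightarrow> i = j"
  unfolding andrasfai_subgraph_emb_def andrasfai_verts_def inj_on_def by auto

text \<open>An embedded \<open>\<Gamma>\<^sub>k\<close> is induced, because \<open>\<Gamma>\<^sub>k\<close> is itself maximal triangle-free.\<close>
lemma emb_E_iff:
  assumes f: "emb f" and ij: "i < 3*k-1" "j < 3*k-1"
  shows "E (f i) (f j) \<longleftrightarrow> andrasfai_edge k i j"
proof
  assume e: "E (f i) (f j)"
  show "andrasfai_edge k i j"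
  proof (rule ccontr)
    assume "\<not> andrasfai_edge k i j"
    moreover have "i \<noteq> j" using e E_irrefl by auto
    ultimately obtain m where m: "m < 3*k-1" "andrasfai_edge k i m" "andrasfai_edge k j m"
      using andrasfai_common_neighbour[OF ij] by blast
    have "E (f j) (f m)" "E (f i) (f m)" using emb_E[OF f] ij m by blast+
    then show False using no_triangle[OF e] by blast
  qed
qed (rule emb_E[OF f ij])

definition trace :: "(nat \<Rightarrow> 'a) \<Rightarrow> 'a \<Rightarrow> nat set" where
  "trace f x = {i. i < 3*k-1 \<and> E x (f i)}"

lemma mem_trace_iff: "i \<in> trace f x \<longleftrightarrow> i < 3*k-1 \<and> E x (f i)"
  by (simp add: trace_def)

lemma trace_subset: "trace f x \<subseteq> {0..<3*k-1}"
  by (auto simp: trace_def)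

lemma finite_trace: "finite (trace f x)"
  using trace_subset finite_subset by blast

lemma card_trace_le: "card (trace f x) \<le> 3*k-1"
  using card_mono[OF _ trace_subset] by simp

lemma trace_independent:
  assumes f: "emb f" and ab: "a \<in> trace f x" "b \<in> trace f x"
  shows "\<not> andrasfai_edge k a b"
proof
  assume "andrasfai_edge k a b"
  moreover have "E x (f a)" "E x (f b)" "a < 3*k-1" "b < 3*k-1" using ab by (auto simp: trace_def)
  ultimately show False using no_triangle[of x "f a" "f b"] emb_E[OF f] E_sym by blast
qed

lemma emb_comp_automorphism:
  assumes f: "emb f" and \<sigma>: "andrasfai_automorphism k \<sigma>"
  shows "emb (f \<circ> \<sigma>)" and "(f \<circ> \<sigma>) ` {0..<3*k-1} = f ` {0..<3*k-1}"
    and "trace (f \<circ> \<sigma>) x = {i. i < 3*k-1 \<and> \<sigma> i \<in> trace f x}"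
    and "card (trace (f \<circ> \<sigma>) x) = card (trace f x)"
proof -
  note \<sigma>D = andrasfai_automorphismD[OF \<sigma>]
  have im: "\<sigma> ` {0..<3*k-1} = {0..<3*k-1}" by (rule andrasfai_automorphism_image[OF \<sigma>])
  show img: "(f \<circ> \<sigma>) ` {0..<3*k-1} = f ` {0..<3*k-1}"
    using im by (metis image_comp)
  show "emb (f \<circ> \<sigma>)"
    unfolding andrasfai_subgraph_emb_def andrasfai_verts_def
  proof (intro conjI ballI impI)
    have "inj_on f (\<sigma> ` {0..<3*k-1})"
      using f im unfolding andrasfai_subgraph_emb_def andrasfai_verts_def by simp
    then show "inj_on (f \<circ> \<sigma>) {0..<3*k-1}" by (rule comp_inj_on[OF \<sigma>D(2)])
    show "(f \<circ> \<sigma>) ` {0..<3*k-1} \<subseteq> V"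
      using f img unfolding andrasfai_subgraph_emb_def andrasfai_verts_def by simp
    fix i j assume "i \<in> {0..<3*k-1}" "j \<in> {0..<3*k-1}" "andrasfai_edge k i j"
    then show "E ((f \<circ> \<sigma>) i) ((f \<circ> \<sigma>) j)" using emb_E[OF f] \<sigma>D(1,3) by auto
  qed
  show T: "trace (f \<circ> \<sigma>) x = {i. i < 3*k-1 \<and> \<sigma> i \<in> trace f x}"
    using \<sigma>D(1) by (auto simp: trace_def)
  have "\<sigma> ` trace (f \<circ> \<sigma>) x = trace f x"
  proof
    show "\<sigma> ` trace (f \<circ> \<sigma>) x \<subseteq> trace f x" using T by auto
    show "trace f x \<subseteq> \<sigma> ` trace (f \<circ> \<sigma>) x"
    proof
      fix t assume t: "t \<in> trace f x"
      then have "t \<in> \<sigma> ` {0..<3*k-1}" using im trace_subset[of f x] by auto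
      then obtain i where "i < 3*k-1" "\<sigma> i = t" by auto
      then show "t \<in> \<sigma> ` trace (f \<circ> \<sigma>) x" using T t by auto
    qed
  qed
  moreover have "inj_on \<sigma> (trace (f \<circ> \<sigma>) x)"
    using \<sigma>D(2) trace_subset inj_on_subset by blast
  ultimately show "card (trace (f \<circ> \<sigma>) x) = card (trace f x)"
    using card_image by metis
qed

lemma emb_fun_upd:
  assumes f: "emb f" and j: "j < 3*k-1" and w: "w \<in> V" "w \<notin> f ` {0..<3*k-1}"
    and w_trace: "trace f w = andrasfai_nbhd k j"
  shows "emb (f(j := w))" and "(f(j := w)) ` {0..<3*k-1} = insert w (f ` ({0..<3*k-1} - {j}))"
proof -
  show "(f(j := w)) ` {0..<3*k-1} = insert w (f ` ({0..<3*k-1} - {j}))" using j by auto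
  have wE: "E w (f i) \<longleftrightarrow> andrasfai_edge k j i" if "i < 3*k-1" for i
    using w_trace that unfolding trace_def andrasfai_nbhd_def by auto
  show "emb (f(j := w))"
    unfolding andrasfai_subgraph_emb_def andrasfai_verts_def
  proof (intro conjI ballI impI)
    show "inj_on (f(j := w)) {0..<3*k-1}"
      using f w unfolding andrasfai_subgraph_emb_def andrasfai_verts_def inj_on_def by auto
    show "(f(j := w)) ` {0..<3*k-1} \<subseteq> V"
      using f w unfolding andrasfai_subgraph_emb_def andrasfai_verts_def by auto
    fix a b assume ab: "a \<in> {0..<3*k-1}" "b \<in> {0..<3*k-1}" "andrasfai_edge k a b"
    show "E ((f(j := w)) a) ((f(j := w)) b)"
    proof (cases "a = j"; cases "b = j")
      assume "a = j" "b = j" then show ?thesis using ab andrasfai_edge_irrefl[OF k_pos] by auto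
    next
      assume "a = j" "b \<noteq> j" then show ?thesis using ab wE by auto
    next
      assume "a \<noteq> j" "b = j"
      then have "E w (f a)" using ab wE andrasfai_edge_sym by auto
      then show ?thesis using \<open>a \<noteq> j\<close> \<open>b = j\<close> E_sym by auto
    next
      assume "a \<noteq> j" "b \<noteq> j" then show ?thesis using ab emb_E[OF f] by auto
    qed
  qed
qed

text \<open>The hexagon \<open>x w (h 0) (h p) (h q) (h t)\<close> would be an induced \<open>C\<^sub>6\<close> without the
  chord \<open>w (h q)\<close>.\<close>
lemma hexagon_chord:
  assumes h: "emb h" and xV: "x \<in> V" and wV: "w \<in> V"
    and outside: "x \<notin> h ` {0..<3*k-1}" "w \<notin> h ` {0..<3*k-1}"
    and xw: "E x w" and w0: "E w (h 0)" and x0: "\<not> E x (h 0)" and xp: "\<not> E x (h p)" and xt: "E x (h t)"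
    and tpq: "t < 3*k-1" "p < 3*k-1" "q < 3*k-1"
    and e0p: "andrasfai_edge k 0 p" and epq: "andrasfai_edge k p q" and etq: "andrasfai_edge k t q"
    and ntp: "\<not> andrasfai_edge k t p" and n0q: "\<not> andrasfai_edge k 0 q"
    and n0t: "\<not> andrasfai_edge k 0 t"
  shows "E w (h q)"
proof (rule ccontr)
  assume wq: "\<not> E w (h q)"
  have z: "0 < 3*k-1" using k_pos by simp
  have E0p: "E (h 0) (h p)" using emb_E[OF h z tpq(2) e0p] .
  have Epq: "E (h p) (h q)" using emb_E[OF h tpq(2,3) epq] .
  have Eqt: "E (h q) (h t)" using emb_E[OF h tpq(3,1)] etq andrasfai_edge_sym[OF tpq(1,3)] by simp
  have xq: "\<not> E x (h q)" using no_triangle[OF xt E_sym[OF Eqt]] .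
  have wp: "\<not> E w (h p)" using no_triangle[OF w0 E0p] .
  have wt: "\<not> E w (h t)" using no_triangle[OF E_sym[OF xw] xt] .
  have H_non_edges: "\<not> E (h 0) (h q)" "\<not> E (h 0) (h t)" "\<not> E (h p) (h t)"
    using emb_E_iff[OF h z tpq(3)] emb_E_iff[OF h z tpq(1)] emb_E_iff[OF h tpq(2,1)]
      n0q n0t ntp andrasfai_edge_sym[OF tpq(2,1)] by simp_all
  have "h 0 \<noteq> h p" "h 0 \<noteq> h q" "h 0 \<noteq> h t" "h p \<noteq> h q" "h p \<noteq> h t" "h q \<noteq> h t"
    by (metis E0p E_irrefl, metis w0 wq, metis x0 xt,
        metis Epq E_irrefl, metis xp xt, metis Eqt E_irrefl)
  moreover have "x \<notin> {w, h 0, h p, h q, h t}" "w \<notin> {h 0, h p, h q, h t}"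
    using outside xw E_irrefl tpq z by auto
  ultimately have distinct: "distinct [x, w, h 0, h p, h q, h t]" by simp
  have in_V: "{x, w, h 0, h p, h q, h t} \<subseteq> V" using xV wV emb_in_V[OF h] tpq z by auto
  have "has_induced_C6 V E"
    by (rule has_induced_C6I[OF E_sym E_irrefl distinct in_V xw w0 E0p Epq Eqt E_sym[OF xt]
      x0 xp xq wp wq wt H_non_edges])
  then show False using no_induced_C6 by blast
qed

lemma outer_common_neighbour_with_0:
  assumes h: "emb h" and xV: "x \<in> V" and x_out: "x \<notin> h ` {0..<3*k-1}"
    and x0: "0 \<notin> trace h x" and x_indep: "trace h x \<inter> andrasfai_nbhd k 0 = {}"
  obtains w where "w \<in> V" "w \<notin> h ` {0..<3*k-1}" "E x w" "E (h 0) w"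
proof -
  have z: "0 < 3*k-1" using k_pos by simp
  have "x \<noteq> h 0" "\<not> E x (h 0)" using x_out x0 z by (auto simp: mem_trace_iff)
  then obtain w where w: "w \<in> V" "E x w" "E (h 0) w"
    using common_neighbour[OF xV emb_in_V[OF h z]] by blast
  have "w \<notin> h ` {0..<3*k-1}"
  proof
    assume "w \<in> h ` {0..<3*k-1}"
    then obtain j where j: "j < 3*k-1" "w = h j" by auto
    then have "j \<in> trace h x" "j \<in> andrasfai_nbhd k 0"
      using w emb_E_iff[OF h z j(1)] by (auto simp: mem_trace_iff andrasfai_nbhd_def)
    then show False using x_indep by blast
  qed
  then show ?thesis using w that by blast
qed

text \<open>A trace meeting both arcs \<open>{1..<k}\<close> and \<open>{2k..<3k-1}\<close> would, by two hexagons, make the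
  common neighbour of \<open>x\<close> and \<open>h 0\<close> adjacent to both ends of the edge \<open>h (k-1) h (2k)\<close>.\<close>
lemma trace_one_side:
  assumes h: "emb h" and xV: "x \<in> V" and x_out: "x \<notin> h ` {0..<3*k-1}"
    and x0: "0 \<notin> trace h x" and x_indep: "trace h x \<inter> andrasfai_nbhd k 0 = {}"
  shows "trace h x \<subseteq> {1..<k} \<or> trace h x \<subseteq> {2*k..<3*k-1}"
proof (rule ccontr)
  have z: "0 < 3*k-1" using k_pos by simp
  have xh0: "\<not> E x (h 0)" using x0 z by (simp add: mem_trace_iff)
  have x_nbhd0: "\<not> E x (h p)" if "p < 3*k-1" "andrasfai_edge k 0 p" for p
    using x_indep that by (auto simp: mem_trace_iff andrasfai_nbhd_def)
  obtain w where wV: "w \<in> V" and w_out: "w \<notin> h ` {0..<3*k-1}" and xw: "E x w" and "E (h 0) w"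
    using outer_common_neighbour_with_0[OF assms] by blast
  have w0: "E w (h 0)" using \<open>E (h 0) w\<close> by (rule E_sym)
  have location: "(1 \<le> t \<and> t < k) \<or> (2*k \<le> t \<and> t < 3*k-1)" if "t \<in> trace h x" for t
  proof -
    have t: "t < 3*k-1" "t \<noteq> 0" using that x0 by (auto simp only: mem_trace_iff)
    then have "\<not> andrasfai_edge k 0 t" using x_nbhd0 that by (auto simp: mem_trace_iff)
    then have "\<not> (k \<le> t \<and> t < 2*k)" using andrasfai_edge_upI[OF z t(1)] by auto
    with t show ?thesis by auto
  qed
  assume "\<not> ?thesis"
  then obtain t1 t2 where "t1 \<in> trace h x" "t1 \<notin> {1..<k}" "t2 \<in> trace h x" "t2 \<notin> {2*k..<3*k-1}"
    by blast
  with location have t1: "t1 \<in> trace h x" "2*k \<le> t1" "t1 < 3*k-1"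
    and t2: "t2 \<in> trace h x" "1 \<le> t2" "t2 < k" by auto
  then have k2: "k \<ge> 2" and lt: "2*k < 3*k-1" "k-1 < k" by auto
  have xt: "E x (h t1)" "E x (h t2)" using t1 t2 by (auto simp: mem_trace_iff)
  have "E w (h (2*k))"
  proof (rule hexagon_chord[OF h xV wV x_out w_out xw w0 xh0 _ xt(2), where p=k])
    show "andrasfai_edge k 0 k" by (rule andrasfai_edge_upI) (use z lt in auto)
    then show "\<not> E x (h k)" using x_nbhd0 lt by simp
    show "andrasfai_edge k k (2*k)" by (rule andrasfai_edge_upI) (use lt k2 in auto)
    show "andrasfai_edge k t2 (2*k)" by (rule andrasfai_edge_upI) (use lt t2 in auto)
    show "\<not> andrasfai_edge k t2 k" by (rule andrasfai_not_edge_close) (use lt t2 in auto)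
    show "\<not> andrasfai_edge k 0 (2*k)" by (rule andrasfai_not_edge_far) (use lt in auto)
    show "\<not> andrasfai_edge k 0 t2" by (rule andrasfai_not_edge_close) (use lt t2 in auto)
  qed (use lt t2 in auto)
  moreover have "E w (h (k-1))"
  proof (rule hexagon_chord[OF h xV wV x_out w_out xw w0 xh0 _ xt(1), where p="2*k-1"])
    show "andrasfai_edge k 0 (2*k-1)" by (rule andrasfai_edge_upI) (use z lt k2 in auto)
    then show "\<not> E x (h (2*k-1))" using x_nbhd0 lt by simp
    show "andrasfai_edge k (2*k-1) (k-1)" by (rule andrasfai_edge_downI) (use lt k2 in auto)
    show "andrasfai_edge k t1 (k-1)" by (rule andrasfai_edge_downI) (use lt t1 k2 in auto)
    show "\<not> andrasfai_edge k t1 (2*k-1)" by (rule andrasfai_not_edge_close) (use lt t1 k2 in auto)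
    show "\<not> andrasfai_edge k 0 (k-1)" by (rule andrasfai_not_edge_close) (use lt k2 in auto)
    show "\<not> andrasfai_edge k 0 t1" by (rule andrasfai_not_edge_far) (use t1 in auto)
  qed (use lt t1 in auto)
  moreover have "E (h (k-1)) (h (2*k))"
    using k2 lt by (intro emb_E[OF h] andrasfai_edge_upI) auto
  ultimately show False using no_triangle[of w "h (k-1)" "h (2*k)"] by blast
qed

text \<open>The induction hypothesis of the main argument, a downward induction on the size of the trace.\<close>
definition traces_above_are_nbhds :: "nat \<Rightarrow> bool" where
  "traces_above_are_nbhds c \<longleftrightarrow> (\<forall>h y. emb h \<longrightarrow> y \<in> V \<longrightarrow> y \<notin> h ` {0..<3*k-1} \<longrightarrow>
     c < card (trace h y) \<longrightarrow> (\<exists>j<3*k-1. trace h y = andrasfai_nbhd k j))"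

lemma traces_above_are_nbhdsD:
  "traces_above_are_nbhds c \<Longrightarrow> emb h \<Longrightarrow> y \<in> V \<Longrightarrow> y \<notin> h ` {0..<3*k-1} \<Longrightarrow>
    c < card (trace h y) \<Longrightarrow> \<exists>j<3*k-1. trace h y = andrasfai_nbhd k j"
  unfolding traces_above_are_nbhds_def by blast

lemma trace_ne_empty:
  assumes k2: "k \<ge> 2" and h: "emb h" and xV: "x \<in> V" and x_out: "x \<notin> h ` {0..<3*k-1}"
    and IH: "traces_above_are_nbhds (card (trace h x))"
  shows "trace h x \<noteq> {}"
proof
  assume empty: "trace h x = {}"
  have z: "0 < 3*k-1" using k_pos by simp
  obtain w where wV: "w \<in> V" and w_out: "w \<notin> h ` {0..<3*k-1}" and xw: "E x w" and "E (h 0) w"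
    using outer_common_neighbour_with_0[OF h xV x_out] empty by blast
  then have "0 \<in> trace h w" using z E_sym by (auto simp: mem_trace_iff)
  then have "card (trace h x) < card (trace h w)"
    using empty finite_trace[of h w] by (auto simp: card_gt_0_iff)
  then obtain j where j: "j < 3*k-1" "trace h w = andrasfai_nbhd k j"
    using traces_above_are_nbhdsD[OF IH h wV w_out] by blast
  let ?h' = "h(j := w)"
  have h': "emb ?h'" using emb_fun_upd(1)[OF h j(1) wV w_out j(2)] .
  have "x \<noteq> w" using xw E_irrefl by auto
  then have x_out': "x \<notin> ?h' ` {0..<3*k-1}"
    using emb_fun_upd(2)[OF h j(1) wV w_out j(2)] x_out by auto
  have "trace ?h' x = {j}"
    using empty xw j(1) by (auto simp: trace_def split: if_splits)
  then obtain j' where "j' < 3*k-1" "andrasfai_nbhd k j' = {j}"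
    using traces_above_are_nbhdsD[OF IH h' xV x_out'] empty by auto
  then show False using andrasfai_nbhd_ne_singleton[OF k2] by blast
qed

lemma trace_of_neighbour_of_0_if_k_eq_1:
  assumes k1: "k = 1" and h: "emb h" and h0w: "E (h 0) w"
  shows "trace h w = andrasfai_nbhd k k"
proof -
  have e01: "andrasfai_edge k 0 1" and e10: "andrasfai_edge k 1 0" and n11: "\<not> andrasfai_edge k 1 1"
    using k1 by (auto simp: andrasfai_edge_iff)
  have n: "3*k-1 = 2" using k1 by simp
  have "E w (h 0)" using h0w by (rule E_sym)
  moreover have "\<not> E w (h 1)" using no_triangle[OF E_sym[OF h0w]] emb_E[OF h _ _ e01] n by auto
  ultimately have "trace h w = {0}" unfolding set_eq_iff mem_trace_iff n
    by (auto simp: less_Suc_eq numeral_2_eq_2)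
  also have "{0} = andrasfai_nbhd k k"
    using e10 n11 unfolding set_eq_iff andrasfai_nbhd_def n
      by (auto simp: less_Suc_eq numeral_2_eq_2 k1)
  finally show ?thesis .
qed

text \<open>Each \<open>h q\<close> with \<open>2k \<le> q < 2k + max (trace h x)\<close> closes a hexagon through \<open>x\<close> and \<open>w\<close>,
  so \<open>w\<close> has a strictly larger trace than \<open>x\<close>; containing \<open>0\<close> and \<open>2k\<close> it must be the
  neighbourhood of \<open>k\<close>.\<close>
lemma trace_of_outer_neighbour_at_0:
  assumes h: "emb h" and xV: "x \<in> V" and x_out: "x \<notin> h ` {0..<3*k-1}"
    and wV: "w \<in> V" and w_out: "w \<notin> h ` {0..<3*k-1}" and xw: "E x w" and w0: "E w (h 0)"
    and low: "trace h x \<subseteq> {1..<k}" and ne: "trace h x \<noteq> {}"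
    and IH: "traces_above_are_nbhds (card (trace h x))"
  shows "trace h w = andrasfai_nbhd k k"
proof -
  have z: "0 < 3*k-1" and kn: "k < 3*k-1" using k_pos by auto
  define b where "b = Max (trace h x)"
  have bT: "b \<in> trace h x" unfolding b_def using ne finite_trace by (intro Max_in) auto
  have le_b: "\<And>t. t \<in> trace h x \<Longrightarrow> t \<le> b" unfolding b_def using finite_trace by simp
  have b: "1 \<le> b" "b < k" using bT low by auto
  then have "b < 3*k-1" by simp
  note b = b this
  have xb: "E x (h b)" using bT by (simp add: mem_trace_iff)
  have "0 \<notin> trace h x" "k \<notin> trace h x" using low by auto
  then have x0: "\<not> E x (h 0)" and xk: "\<not> E x (h k)" using z kn by (auto simp: mem_trace_iff)
  have far: "E w (h q)" if q: "2*k \<le> q" "q < 2*k + b" for q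
  proof (rule hexagon_chord[OF h xV wV x_out w_out xw w0 x0 xk xb b(3) kn])
    show "q < 3*k-1" using q b by arith
    show "andrasfai_edge k 0 k" by (rule andrasfai_edge_upI) (use z kn in auto)
    show "andrasfai_edge k k q" by (rule andrasfai_edge_upI) (use q b kn in auto)
    show "andrasfai_edge k b q" by (rule andrasfai_edge_upI) (use q b in auto)
    show "\<not> andrasfai_edge k b k" by (rule andrasfai_not_edge_close) (use b kn in auto)
    show "\<not> andrasfai_edge k 0 q" by (rule andrasfai_not_edge_far) (use q b in auto)
    show "\<not> andrasfai_edge k 0 b" by (rule andrasfai_not_edge_close) (use b in auto)
  qed
  have big: "insert 0 {2*k..<2*k+b} \<subseteq> trace h w"
    using w0 far z b by (auto simp: mem_trace_iff)
  have "trace h x \<subseteq> {1..<b+1}" using low le_b by fastforce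
  then have "card (trace h x) \<le> b" using card_mono[of "{1..<b+1}"] by simp
  also have "b < card (insert 0 {2*k..<2*k+b})" using k_pos by simp
  also have "\<dots> \<le> card (trace h w)" using card_mono[OF finite_trace big] .
  finally obtain j where j: "j < 3*k-1" "trace h w = andrasfai_nbhd k j"
    using traces_above_are_nbhdsD[OF IH h wV w_out] by blast
  have "0 \<in> andrasfai_nbhd k j" "2*k \<in> andrasfai_nbhd k j" using j(2) big b by auto
  then have "andrasfai_edge k j 0" "andrasfai_edge k j (2*k)" "2*k < 3*k-1"
    unfolding andrasfai_nbhd_def by auto
  then have "j = k" unfolding andrasfai_edge_iff[OF j(1) z] andrasfai_edge_iff[OF j(1) \<open>2*k < 3*k-1\<close>]
    by (elim disjE conjE; linarith)
  then show ?thesis using j by simp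
qed

lemma exists_outer_twin_of_k:
  assumes h: "emb h" and xV: "x \<in> V" and x_out: "x \<notin> h ` {0..<3*k-1}"
    and low: "trace h x \<subseteq> {1..<k}" and IH: "traces_above_are_nbhds (card (trace h x))"
  obtains w where "w \<in> V" "w \<notin> h ` {0..<3*k-1}" "E x w" "trace h w = andrasfai_nbhd k k"
proof -
  have "trace h x \<inter> andrasfai_nbhd k 0 = {}"
    using low by (auto simp: andrasfai_nbhd_def andrasfai_edge_iff)
  moreover have "0 \<notin> trace h x" using low by auto
  ultimately obtain w where wV: "w \<in> V" and w_out: "w \<notin> h ` {0..<3*k-1}" and xw: "E x w"
    and h0w: "E (h 0) w"
    using outer_common_neighbour_with_0[OF h xV x_out] by blast
  have "trace h w = andrasfai_nbhd k k"
  proof (cases "k = 1")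
    case True
    then show ?thesis using trace_of_neighbour_of_0_if_k_eq_1[OF _ h h0w] by blast
  next
    case False
    then have "trace h x \<noteq> {}" using trace_ne_empty[OF _ h xV x_out IH] k_pos by simp
    then show ?thesis
      using trace_of_outer_neighbour_at_0[OF h xV x_out wV w_out xw E_sym[OF h0w] low _ IH] by blast
  qed
  then show ?thesis using that wV w_out xw by blast
qed

text \<open>Replacing \<open>h k\<close> by its twin adds \<open>k\<close> to the trace of \<open>x\<close>; by induction the enlarged
  trace is a neighbourhood, and a neighbourhood inside the arc \<open>{1..k}\<close> containing \<open>k\<close> is all
  of it.\<close>
lemma trace_eq_low_arc:
  assumes h: "emb h" and xV: "x \<in> V" and x_out: "x \<notin> h ` {0..<3*k-1}"
    and low: "trace h x \<subseteq> {1..<k}" and IH: "traces_above_are_nbhds (card (trace h x))"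
  shows "trace h x = {1..<k}"
proof (rule ccontr)
  assume ne: "trace h x \<noteq> {1..<k}"
  have kn: "k < 3*k-1" using k_pos by simp
  obtain w where wV: "w \<in> V" and w_out: "w \<notin> h ` {0..<3*k-1}" and xw: "E x w"
    and w_trace: "trace h w = andrasfai_nbhd k k"
    using exists_outer_twin_of_k[OF h xV x_out low IH] by blast
  let ?h1 = "h(k := w)"
  have h1: "emb ?h1" using emb_fun_upd(1)[OF h kn wV w_out w_trace] .
  have "x \<noteq> w" using xw E_irrefl by auto
  then have x_out1: "x \<notin> ?h1 ` {0..<3*k-1}" using emb_fun_upd(2)[OF h kn wV w_out w_trace] x_out by auto
  have k_notin: "k \<notin> trace h x" using low by auto
  have trace1: "trace ?h1 x = insert k (trace h x)"
    using xw kn by (auto simp: trace_def)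
  then have "card (trace h x) < card (trace ?h1 x)" using k_notin finite_trace by simp
  then obtain j where j: "j < 3*k-1" "trace ?h1 x = andrasfai_nbhd k j"
    using traces_above_are_nbhdsD[OF IH h1 xV x_out1] by blast
  have nbhd_j: "andrasfai_nbhd k j = insert k (trace h x)" using j trace1 by simp
  have "i \<in> trace h x" if i: "1 \<le> i" "i < k" for i
  proof (rule ccontr)
    assume "i \<notin> trace h x"
    then have i_notin: "i \<notin> andrasfai_nbhd k j" using nbhd_j i by auto
    have in_arc: "1 \<le> m \<and> m \<le> k" if "m \<in> andrasfai_nbhd k j" for m
      using that nbhd_j low k_pos by auto
    have iN: "i < 3*k-1" using i by simp
    show False
    proof (cases "i = j")
      case True
      have "k \<in> andrasfai_nbhd k j" using nbhd_j by simp
      then have "andrasfai_edge k i k" using True by (simp add: andrasfai_nbhd_def)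
      moreover have "\<not> andrasfai_edge k i k" by (rule andrasfai_not_edge_close) (use iN kn i in auto)
      ultimately show False by simp
    next
      case False
      have "\<not> andrasfai_edge k j i" using i_notin iN by (simp add: andrasfai_nbhd_def)
      then obtain m where m: "m < 3*k-1" "andrasfai_edge k j m" "andrasfai_edge k i m"
        using andrasfai_common_neighbour[OF j(1) iN] False by metis
      then have "1 \<le> m" "m \<le> k" using in_arc by (auto simp: andrasfai_nbhd_def)
      then have "\<not> andrasfai_edge k i m" by (intro andrasfai_not_edge_close) (use iN m(1) i in auto)
      then show False using m(3) by simp
    qed
  qed
  then show False using ne low by auto
qed

lemma trace_comp_automorphism_eq_nbhd:
  assumes \<sigma>: "andrasfai_automorphism k \<sigma>" and j: "j < 3*k-1"
    and trace: "trace (h \<circ> \<sigma>) y = andrasfai_nbhd k j"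
  shows "trace h y = andrasfai_nbhd k (\<sigma> j)"
proof (rule set_eqI)
  fix i
  note \<sigma>D = andrasfai_automorphismD[OF \<sigma>]
  show "i \<in> trace h y \<longleftrightarrow> i \<in> andrasfai_nbhd k (\<sigma> j)"
  proof (cases "i < 3*k-1")
    case True
    then obtain i' where i': "i' < 3*k-1" "i = \<sigma> i'"
      using andrasfai_automorphism_image[OF \<sigma>] by (metis atLeastLessThan_iff imageE zero_le)
    have "i \<in> trace h y \<longleftrightarrow> i' \<in> trace (h \<circ> \<sigma>) y"
      using i' \<sigma>D(1)[OF i'(1)] by (simp add: mem_trace_iff)
    also have "\<dots> \<longleftrightarrow> andrasfai_edge k j i'" using trace i' by (simp add: andrasfai_nbhd_def)
    also have "\<dots> \<longleftrightarrow> andrasfai_edge k (\<sigma> j) i" using \<sigma>D(3)[OF j i'(1)] i'(2) by simp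
    finally show ?thesis using True by (simp add: andrasfai_nbhd_def)
  qed (auto simp: mem_trace_iff andrasfai_nbhd_def)
qed

text \<open>Reflecting the copy about \<open>k\<close> fixes the arc \<open>{1..<k}\<close> and swaps \<open>0\<close> and \<open>k\<close>, so a twin
  of \<open>h k\<close> for the reflected copy is a twin of \<open>h 0\<close> for the original one.\<close>
lemma exists_outer_twin_of_0:
  assumes h: "emb h" and xV: "x \<in> V" and x_out: "x \<notin> h ` {0..<3*k-1}"
    and low: "trace h x = {1..<k}" and IH: "traces_above_are_nbhds (card (trace h x))"
  obtains w' where "w' \<in> V" "w' \<notin> h ` {0..<3*k-1}" "E x w'" "trace h w' = andrasfai_nbhd k 0"
proof -
  have kn: "k < 3*k-1" using k_pos by simp
  let ?\<tau> = "andrasfai_reflect k k"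
  have \<tau>: "andrasfai_automorphism k ?\<tau>" by (rule andrasfai_automorphism_reflect[OF kn])
  note comp = emb_comp_automorphism[OF h \<tau>]
  have "trace (h \<circ> ?\<tau>) x = {i. i < 3*k-1 \<and> ?\<tau> i \<in> {1..<k}}" using comp(3) low by simp
  also have "\<dots> = {1..<k}"
  proof (rule set_eqI)
    fix i
    show "i \<in> {i. i < 3*k-1 \<and> ?\<tau> i \<in> {1..<k}} \<longleftrightarrow> i \<in> {1..<k}"
      by (cases "i < 3*k-1") (use andrasfai_reflect_cases[OF kn, of i] kn in auto)
  qed
  finally have low2: "trace (h \<circ> ?\<tau>) x = {1..<k}" .
  obtain w' where w'V: "w' \<in> V" and w'_out: "w' \<notin> (h \<circ> ?\<tau>) ` {0..<3*k-1}" and xw': "E x w'"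
    and "trace (h \<circ> ?\<tau>) w' = andrasfai_nbhd k k"
    using exists_outer_twin_of_k[OF comp(1) xV _ _ ] comp(2) comp(4) low low2 x_out IH by auto
  then have "trace h w' = andrasfai_nbhd k (?\<tau> k)"
    using trace_comp_automorphism_eq_nbhd[OF \<tau> kn] by blast
  moreover have "?\<tau> k = 0" using kn by (simp add: andrasfai_reflect_eq)
  ultimately show ?thesis using that w'V w'_out xw' comp(2) by auto
qed

text \<open>The three outer vertices \<open>x\<close>, \<open>w'\<close>, \<open>w\<close> fill the gaps \<open>0\<close>, \<open>k + 1\<close>, \<open>2k + 1\<close> of
  \<open>\<Gamma>\<^sub>k\<^sub>+\<^sub>1\<close> left by \<open>andrasfai_shrink\<close>.\<close>
definition extension :: "(nat \<Rightarrow> 'a) \<Rightarrow> 'a \<Rightarrow> 'a \<Rightarrow> 'a \<Rightarrow> nat \<Rightarrow> 'a" where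
  "extension h x w' w p =
    (if p = 0 then x else if p = k+1 then w' else if p = 2*k+1 then w else h (andrasfai_shrink k p))"

context
  fixes h :: "nat \<Rightarrow> 'a" and x w w' :: 'a
  assumes h: "emb h" and xV: "x \<in> V" and wV: "w \<in> V" and w'V: "w' \<in> V"
    and x_out: "x \<notin> h ` {0..<3*k-1}" and w_out: "w \<notin> h ` {0..<3*k-1}"
    and w'_out: "w' \<notin> h ` {0..<3*k-1}"
    and xw: "E x w" and xw': "E x w'"
    and x_trace: "trace h x = {1..<k}" and w_trace: "trace h w = andrasfai_nbhd k k"
    and w'_trace: "trace h w' = andrasfai_nbhd k 0"
begin

abbreviation g :: "nat \<Rightarrow> 'a" where "g \<equiv> extension h x w' w"

lemma extension_simps:
  "g 0 = x" "g (Suc k) = w'" "g (Suc (2*k)) = w"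
  "p \<notin> {0, k+1, 2*k+1} \<Longrightarrow> g p = h (andrasfai_shrink k p)"
  using k_pos by (auto simp: extension_def)

lemma x_adj_iff: "i < 3*k-1 \<Longrightarrow> E x (h i) \<longleftrightarrow> 1 \<le> i \<and> i < k"
  using x_trace by (auto simp: set_eq_iff mem_trace_iff)

lemma w_adj_iff: "i < 3*k-1 \<Longrightarrow> E w (h i) \<longleftrightarrow> andrasfai_edge k k i"
  using w_trace by (auto simp: set_eq_iff mem_trace_iff andrasfai_nbhd_def)

lemma w'_adj_iff: "i < 3*k-1 \<Longrightarrow> E w' (h i) \<longleftrightarrow> andrasfai_edge k 0 i"
  using w'_trace by (auto simp: set_eq_iff mem_trace_iff andrasfai_nbhd_def)

lemma extension_E_special:
  assumes p: "p \<in> {0, k+1, 2*k+1}" and q: "q < 3*k+2" and pq: "andrasfai_edge (k+1) p q"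
  shows "E (g p) (g q)"
proof -
  have z: "0 < 3*k-1" and kn: "k < 3*k-1" using k_pos by auto
  have pq': "(k + 1 + q \<le> p \<and> p < 2*k + 2 + q) \<or> (k + 1 + p \<le> q \<and> q < 2*k + 2 + p)"
    using pq andrasfai_Suc_edge_iff[OF _ q] p by auto
  show ?thesis
  proof (cases "q \<in> {0, k+1, 2*k+1}")
    case True
    with p pq' k_pos
    consider "p = 0" "q = k+1" | "p = 0" "q = 2*k+1" | "q = 0" "p = k+1" | "q = 0" "p = 2*k+1"
      by auto
    then show ?thesis using xw xw' E_sym[OF xw] E_sym[OF xw'] k_pos by cases (auto simp: extension_def)
  next
    case False
    note shr = andrasfai_shrink_cases[OF q False] and shr_lt = andrasfai_shrink_less[OF k_pos q False]
    from p consider "p = 0" | "p = k+1" | "p = 2*k+1" by blast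
    then show ?thesis
    proof cases
      case 1
      then have "1 \<le> andrasfai_shrink k q \<and> andrasfai_shrink k q < k" using pq' shr False by auto
      then show ?thesis using 1 x_adj_iff[OF shr_lt] False by (simp add: extension_simps)
    next
      case 2
      then have "k \<le> andrasfai_shrink k q \<and> andrasfai_shrink k q < 2*k" using pq' shr False by auto
      then have "andrasfai_edge k 0 (andrasfai_shrink k q)" using andrasfai_edge_upI[OF z shr_lt]
        by auto
      then show ?thesis using 2 w'_adj_iff[OF shr_lt] False by (simp add: extension_simps)
    next
      case 3
      then have "andrasfai_shrink k q = 0 \<or> 2*k \<le> andrasfai_shrink k q" using pq' shr False by auto
      then have "andrasfai_edge k k (andrasfai_shrink k q)"
        using andrasfai_edge_downI[OF kn z] andrasfai_edge_upI[OF kn shr_lt] shr_lt k_pos by auto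
      then show ?thesis using 3 w_adj_iff[OF shr_lt] False by (simp add: extension_simps)
    qed
  qed
qed

lemma extension_E:
  assumes p: "p < 3*k+2" and q: "q < 3*k+2" and pq: "andrasfai_edge (k+1) p q"
  shows "E (g p) (g q)"
proof (cases "p \<in> {0, k+1, 2*k+1}")
  case True show ?thesis using extension_E_special[OF True q pq] .
next
  case pF: False
  show ?thesis
  proof (cases "q \<in> {0, k+1, 2*k+1}")
    case True
    have "andrasfai_edge (k+1) q p"
      using pq andrasfai_Suc_edge_iff[OF p q] andrasfai_Suc_edge_iff[OF q p] by auto
    then show ?thesis using extension_E_special[OF True p] E_sym by blast
  next
    case qF: False
    have "andrasfai_edge k (andrasfai_shrink k p) (andrasfai_shrink k q)"
      by (rule andrasfai_shrink_edge[OF k_pos p pF q qF pq])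
    then show ?thesis
      using emb_E[OF h] andrasfai_shrink_less[OF k_pos] p q pF qF by (simp add: extension_simps)
  qed
qed

lemma inj_on_extension: "inj_on g {0..<3*k+2}"
proof -
  let ?S = "{0, k+1, 2*k+1}" and ?R = "{0..<3*k+2} - {0, k+1, 2*k+1}"
  have shrink_R: "andrasfai_shrink k ` ?R \<subseteq> {0..<3*k-1}"
  proof (rule image_subsetI)
    fix p assume "p \<in> ?R"
    then show "andrasfai_shrink k p \<in> {0..<3*k-1}" using andrasfai_shrink_less[OF k_pos, of p] by auto
  qed
  have g_R: "g p = h (andrasfai_shrink k p)" if "p \<in> ?R" for p
    using extension_simps(4)[of p] that by simp
  have inj_R: "inj_on g ?R"
  proof (rule inj_onI)
    fix p q assume pq: "p \<in> ?R" "q \<in> ?R" "g p = g q"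
    then have "andrasfai_shrink k p = andrasfai_shrink k q"
      using g_R emb_eq_iff[OF h] shrink_R by (metis atLeastLessThan_iff image_subset_iff)
    then show "p = q" by (rule inj_onD[OF inj_on_andrasfai_shrink _ pq(1,2)])
  qed
  have z: "0 < 3*k-1" using k_pos by simp
  have "andrasfai_edge k k 0" using k_pos by (simp add: andrasfai_edge_iff)
  then have "E w (h 0)" "\<not> E w' (h 0)"
    using w_adj_iff[OF z] w'_adj_iff[OF z] andrasfai_edge_irrefl[OF k_pos z] by blast+
  then have "w \<noteq> w'" by blast
  moreover have "x \<noteq> w" "x \<noteq> w'" using xw xw' E_irrefl by auto
  moreover have "0 \<noteq> k+1" "0 \<noteq> 2*k+1" "k+1 \<noteq> 2*k+1" using k_pos by auto
  ultimately have inj_S: "inj_on g ?S" unfolding inj_on_def by (auto simp: extension_simps)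
  have "g ` ?R \<subseteq> h ` {0..<3*k-1}"
  proof (rule image_subsetI)
    fix p assume "p \<in> ?R"
    then show "g p \<in> h ` {0..<3*k-1}" using g_R shrink_R by blast
  qed
  moreover have "g ` ?S \<inter> h ` {0..<3*k-1} = {}"
    using x_out w_out w'_out by (simp add: extension_simps)
  ultimately have "g ` (?S - ?R) \<inter> g ` (?R - ?S) = {}" by auto
  then have "inj_on g (?S \<union> ?R)" using inj_S inj_R by (simp only: inj_on_Un)
  moreover have "?S \<union> ?R = {0..<3*k+2}" by auto
  ultimately show ?thesis by simp
qed

lemma contains_andrasfai_Suc: "contains_andrasfai (k+1) V E"
proof -
  have verts: "andrasfai_verts (k+1) = {0..<3*k+2}" by (simp add: andrasfai_verts_def)
  have "g p \<in> V" if "p < 3*k+2" for p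
    using that xV wV w'V emb_in_V[OF h] andrasfai_shrink_less[OF k_pos] by (auto simp: extension_def)
  then have "andrasfai_subgraph_emb (k+1) V E g"
    using inj_on_extension extension_E unfolding andrasfai_subgraph_emb_def verts by auto
  then show ?thesis unfolding contains_andrasfai_def by blast
qed

end

lemma trace_not_low:
  assumes h: "emb h" and xV: "x \<in> V" and x_out: "x \<notin> h ` {0..<3*k-1}"
    and low: "trace h x \<subseteq> {1..<k}" and IH: "traces_above_are_nbhds (card (trace h x))"
  shows False
proof -
  have arc: "trace h x = {1..<k}" by (rule trace_eq_low_arc[OF h xV x_out low IH])
  obtain w where "w \<in> V" "w \<notin> h ` {0..<3*k-1}" "E x w" "trace h w = andrasfai_nbhd k k"
    using exists_outer_twin_of_k[OF h xV x_out low IH] .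
  moreover obtain w' where "w' \<in> V" "w' \<notin> h ` {0..<3*k-1}" "E x w'" "trace h w' = andrasfai_nbhd k 0"
    using exists_outer_twin_of_0[OF h xV x_out arc IH] .
  ultimately have "contains_andrasfai (k+1) V E"
    using contains_andrasfai_Suc[OF h xV _ _ x_out _ _ _ _ arc] by blast
  then show False using no_andrasfai_Suc by contradiction
qed

lemma trace_dominates_0:
  assumes h: "emb h" and xV: "x \<in> V" and x_out: "x \<notin> h ` {0..<3*k-1}"
    and IH: "traces_above_are_nbhds (card (trace h x))"
  shows "0 \<in> trace h x \<or> trace h x \<inter> andrasfai_nbhd k 0 \<noteq> {}"
proof (rule ccontr)
  assume "\<not> ?thesis"
  then have x0: "0 \<notin> trace h x" and indep: "trace h x \<inter> andrasfai_nbhd k 0 = {}" by auto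
  from trace_one_side[OF h xV x_out x0 indep] show False
  proof
    assume "trace h x \<subseteq> {1..<k}"
    then show False using trace_not_low[OF h xV x_out _ IH] by blast
  next
    assume high: "trace h x \<subseteq> {2*k..<3*k-1}"
    have z: "0 < 3*k-1" using k_pos by simp
    let ?\<rho> = "andrasfai_reflect k 0"
    have \<rho>: "andrasfai_automorphism k ?\<rho>" by (rule andrasfai_automorphism_reflect[OF z])
    note comp = emb_comp_automorphism[OF h \<rho>]
    have "trace (h \<circ> ?\<rho>) x \<subseteq> {1..<k}"
    proof
      fix i assume "i \<in> trace (h \<circ> ?\<rho>) x"
      then have i: "i < 3*k-1" "2*k \<le> ?\<rho> i" using comp(3) high by auto
      then show "i \<in> {1..<k}" using andrasfai_reflect_cases[OF z i(1)] by auto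
    qed
    then show False
      using trace_not_low[OF comp(1) xV] x_out IH comp(2) comp(4) by simp
  qed
qed

lemma trace_dominates:
  assumes h: "emb h" and xV: "x \<in> V" and x_out: "x \<notin> h ` {0..<3*k-1}"
    and IH: "traces_above_are_nbhds (card (trace h x))" and i: "i < 3*k-1"
  shows "i \<in> trace h x \<or> (\<exists>t\<in>trace h x. andrasfai_edge k i t)"
proof -
  let ?r = "andrasfai_rotate k i"
  have r: "andrasfai_automorphism k ?r" by (rule andrasfai_automorphism_rotate[OF i])
  note rD = andrasfai_automorphismD[OF r] and comp = emb_comp_automorphism[OF h r]
  have z: "0 < 3*k-1" using k_pos by simp
  have r0: "?r 0 = i" using i by (simp add: andrasfai_rotate_eq)
  have "0 \<in> trace (h \<circ> ?r) x \<or> trace (h \<circ> ?r) x \<inter> andrasfai_nbhd k 0 \<noteq> {}"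
    using trace_dominates_0[OF comp(1) xV] x_out IH comp(2) comp(4) by simp
  then show ?thesis
  proof
    assume "0 \<in> trace (h \<circ> ?r) x"
    then show ?thesis using comp(3) r0 by auto
  next
    assume "trace (h \<circ> ?r) x \<inter> andrasfai_nbhd k 0 \<noteq> {}"
    then obtain p where p: "p < 3*k-1" "?r p \<in> trace h x" "andrasfai_edge k 0 p"
      using comp(3) by (auto simp: andrasfai_nbhd_def)
    then have "andrasfai_edge k i (?r p)" using rD(3)[OF z p(1)] r0 by simp
    then show ?thesis using p(2) by blast
  qed
qed

theorem trace_is_andrasfai_nbhd:
  assumes "emb f" "x \<in> V" "x \<notin> f ` {0..<3*k-1}"
  shows "\<exists>j<3*k-1. trace f x = andrasfai_nbhd k j"
  using assms
proof (induction "3*k-1 - card (trace f x)" arbitrary: f x rule: less_induct)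
  case less
  note f = less.prems(1) and xV = less.prems(2) and x_out = less.prems(3)
  have IH: "traces_above_are_nbhds (card (trace f x))"
    unfolding traces_above_are_nbhds_def
  proof (intro allI impI)
    fix h y assume "emb h" "y \<in> V" "y \<notin> h ` {0..<3*k-1}" "card (trace f x) < card (trace h y)"
    moreover have "3*k-1 - card (trace h y) < 3*k-1 - card (trace f x)"
      using calculation(4) card_trace_le[of h y] by linarith
    ultimately show "\<exists>j<3*k-1. trace h y = andrasfai_nbhd k j" using less.hyps by blast
  qed
  show ?case
  proof (rule maximal_independent_eq_andrasfai_nbhd[OF k_pos trace_subset])
    show "\<And>a b. a \<in> trace f x \<Longrightarrow> b \<in> trace f x \<Longrightarrow> \<not> andrasfai_edge k a b"
      by (rule trace_independent[OF f])
    show "\<And>i. i < 3*k-1 \<Longrightarrow> i \<notin> trace f x \<Longrightarrow> \<exists>t\<in>trace f x. andrasfai_edge k i t"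
      using trace_dominates[OF f xV x_out IH] by blast
  qed
qed

lemma is_twin_of_trace:
  assumes f: "emb f" and j: "j < 3*k-1" and trace: "trace f q = andrasfai_nbhd k j"
  shows "is_twin E (f ` andrasfai_verts k) (f j) q"
  unfolding is_twin_def andrasfai_verts_def
proof (rule set_eqI)
  fix y
  show "y \<in> {z \<in> f ` {0..<3*k-1}. E (f j) z} \<longleftrightarrow> y \<in> {z \<in> f ` {0..<3*k-1}. E q z}"
  proof (cases "y \<in> f ` {0..<3*k-1}")
    case True
    then obtain i where i: "i < 3*k-1" "y = f i" by auto
    have "E (f j) (f i) \<longleftrightarrow> andrasfai_edge k j i" using emb_E_iff[OF f j i(1)] .
    also have "\<dots> \<longleftrightarrow> E q (f i)" using trace i(1)
      by (auto simp: set_eq_iff mem_trace_iff andrasfai_nbhd_def)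
    finally show ?thesis using True i by auto
  qed auto
qed

end

theorem lemma3p4:
  fixes V :: "'a set" and E :: "'a \<Rightarrow> 'a \<Rightarrow> bool" and k :: nat and f :: "nat \<Rightarrow> 'a"
  assumes "k \<ge> 1"
    and "classA V E"
    and "\<not> contains_andrasfai (k + 1) V E"
    and "andrasfai_subgraph_emb k V E f"
  shows "\<forall>q\<in>V. \<exists>h\<in>f ` andrasfai_verts k. is_twin E (f ` andrasfai_verts k) h q"
proof
  interpret andrasfai_free_classA V E k using assms(1-3) by unfold_locales
  fix q assume qV: "q \<in> V"
  show "\<exists>h\<in>f ` andrasfai_verts k. is_twin E (f ` andrasfai_verts k) h q"
  proof (cases "q \<in> f ` andrasfai_verts k")
    case True
    then show ?thesis unfolding is_twin_def by blast
  next
    case False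
    then obtain j where j: "j < 3*k-1" "trace f q = andrasfai_nbhd k j"
      using trace_is_andrasfai_nbhd[OF assms(4) qV] by (auto simp: andrasfai_verts_def)
    then have "f j \<in> f ` andrasfai_verts k" by (simp add: andrasfai_verts_def)
    with is_twin_of_trace[OF assms(4) j] show ?thesis by blast
  qed
qed

end
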